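(* Let $n\ge2$ and let $\mathbf{r}$ be an $\mathbb{R}^n$-valued random vector with $\mathbb{E}|r_i|<\infty$ for all $i$; set $\mathbf{R}=e^{\mathbf{r}}$ (componentwise), $\mathbf{m}=\mathbb{E}[\mathbf{r}]$, and $J(\boldsymbol{\pi})=\mathbb{E}[\gamma(\boldsymbol{\pi},\mathbf{r})]=\mathbb{E}[\log\langle\boldsymbol{\pi},\mathbf{R}\rangle]-\langle\boldsymbol{\pi},\mathbf{m}\rangle$ for $\boldsymbol{\pi}\in\Delta_n$ (which is finite). Then $\boldsymbol{\pi}^\star\in\Delta_n$ maximizes $J$ over $\Delta_n$ if and only if $$\mathbb{E}\Big[\frac{\langle\boldsymbol{\pi},\mathbf{R}\rangle}{\langle\boldsymbol{\pi}^\star,\mathbf{R}\rangle}\Big]\le1+\langle\boldsymbol{\pi}-\boldsymbol{\pi}^\star,\mathbf{m}\rangle\quad\text{for every }\boldsymbol{\pi}\in\Delta_n,$$ with equality for every $\boldsymbol{\pi}\in\Delta_n$ satisfying $\supp(\boldsymbol{\pi})\subseteq\supp(\boldsymbol{\pi}^\star)$.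
   Context: $\Delta_n=\{\mathbf{x}\in[0,1]^n:\sum_ix_i=1\}$; $\supp(\mathbf{x})=\{i:x_i>0\}$. For $\boldsymbol{\pi}\in\Delta_n$ and $\mathbf{r}\in\mathbb{R}^n$, $\gamma(\boldsymbol{\pi},\mathbf{r})=\log\big(\sum_{i\in\supp(\boldsymbol{\pi})}\pi_ie^{r_i}\big)-\sum_{i\in\supp(\boldsymbol{\pi})}\pi_ir_i$. The expectation of a nonnegative random variable may equal $+\infty$. *)

theory Defs
  imports "HOL-Probability.Probability"
begin

text \<open>Vectors in R^n are represented as functions nat => real; only indices i < n matter.\<close>

definition prob_simplex :: "nat \<Rightarrow> (nat \<Rightarrow> real) set" where
  "prob_simplex n = {x. (\<forall>i<n. 0 \<le> x i \<and> x i \<le> 1) \<and> (\<Sum>i<n. x i) = 1}"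

definition supp :: "nat \<Rightarrow> (nat \<Rightarrow> real) \<Rightarrow> nat set" where
  "supp n x = {i. i < n \<and> x i > 0}"

definition gamma :: "nat \<Rightarrow> (nat \<Rightarrow> real) \<Rightarrow> (nat \<Rightarrow> real) \<Rightarrow> real" where
  "gamma n p r = ln (\<Sum>i\<in>supp n p. p i * exp (r i)) - (\<Sum>i\<in>supp n p. p i * r i)"

end

theory Submission
  imports Defs
begin

(* Write X = <pi,R> / <pi*,R>. Moving from pi* towards pi by a step t changes J by
   E[ln (1 + t (X - 1))] - t <pi - pi*, m>. Sufficiency is the case t = 1 together with
   ln X <= X - 1. Conversely, at a maximiser these differences are nonpositive for 0 < t <= 1;
   dividing by t and letting t -> 0 with Fatou's lemma gives E[X] <= 1 + <pi - pi*, m>.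
   If supp pi is contained in supp pi*, then X is bounded and small negative steps are
   admissible as well, and the second order bound ln (1 + z) >= z - 2 z^2 yields the
   reverse inequality. *)

definition wealth :: "nat \<Rightarrow> (nat \<Rightarrow> real) \<Rightarrow> (nat \<Rightarrow> real) \<Rightarrow> real" where
  "wealth n p x = (\<Sum>i<n. p i * exp (x i))"

lemma prob_simplex_iff: "p \<in> prob_simplex n \<longleftrightarrow> (\<forall>i<n. 0 \<le> p i) \<and> (\<Sum>i<n. p i) = 1"
proof
  assume p: "(\<forall>i<n. 0 \<le> p i) \<and> (\<Sum>i<n. p i) = 1"
  have "p i \<le> 1" if "i < n" for i
    using member_le_sum[of i "{..<n}" p] p that by auto
  with p show "p \<in> prob_simplex n" by (simp add: prob_simplex_def)
qed (simp add: prob_simplex_def)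

lemma prob_simplex_nonneg: "p \<in> prob_simplex n \<Longrightarrow> i < n \<Longrightarrow> 0 \<le> p i"
  by (simp add: prob_simplex_iff)

lemma prob_simplex_sum: "p \<in> prob_simplex n \<Longrightarrow> (\<Sum>i<n. p i) = 1"
  by (simp add: prob_simplex_iff)

lemma affine_comb_in_prob_simplex:
  assumes "p \<in> prob_simplex n" "q \<in> prob_simplex n"
    and "\<And>i. i < n \<Longrightarrow> 0 \<le> q i + t * (p i - q i)"
  shows "(\<lambda>i. q i + t * (p i - q i)) \<in> prob_simplex n"
  using assms by (simp add: prob_simplex_iff sum.distrib sum_subtractf sum_distrib_left[symmetric])

lemma convex_comb_in_prob_simplex:
  assumes "p \<in> prob_simplex n" "q \<in> prob_simplex n" "0 \<le> t" "t \<le> 1"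
  shows "(\<lambda>i. q i + t * (p i - q i)) \<in> prob_simplex n"
proof (rule affine_comb_in_prob_simplex[OF assms(1,2)])
  fix i assume "i < n"
  then have "0 \<le> (1 - t) * q i + t * p i"
    using assms by (simp add: prob_simplex_nonneg)
  then show "0 \<le> q i + t * (p i - q i)" by argo
qed

lemma prob_simplex_sum_mult_bounds:
  assumes p: "p \<in> prob_simplex n" and f: "\<And>i. i < n \<Longrightarrow> a \<le> f i \<and> f i \<le> b"
  shows "a \<le> (\<Sum>i<n. p i * f i)" "(\<Sum>i<n. p i * f i) \<le> b"
proof -
  have "a = (\<Sum>i<n. p i * a)" "b = (\<Sum>i<n. p i * b)"
    using prob_simplex_sum[OF p] by (simp_all add: sum_distrib_right[symmetric])
  moreover have "(\<Sum>i<n. p i * a) \<le> (\<Sum>i<n. p i * f i)" "(\<Sum>i<n. p i * f i) \<le> (\<Sum>i<n. p i * b)"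
    using f prob_simplex_nonneg[OF p] by (auto intro!: sum_mono mult_left_mono)
  ultimately show "a \<le> (\<Sum>i<n. p i * f i)" "(\<Sum>i<n. p i * f i) \<le> b" by simp_all
qed

lemma gamma_eq_ln_wealth:
  assumes "p \<in> prob_simplex n"
  shows "gamma n p x = ln (wealth n p x) - (\<Sum>i<n. p i * x i)"
proof -
  have "\<And>i. i \<in> {..<n} - supp n p \<Longrightarrow> p i = 0"
    using assms by (force simp: supp_def prob_simplex_iff)
  then have "(\<Sum>i\<in>supp n p. p i * f i) = (\<Sum>i<n. p i * f i)" for f :: "nat \<Rightarrow> real"
    by (intro sum.mono_neutral_left) (auto simp: supp_def)
  then show ?thesis by (simp add: gamma_def wealth_def)
qed

lemma wealth_bounds:
  assumes "p \<in> prob_simplex n"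
  shows "exp (- (\<Sum>i<n. \<bar>x i\<bar>)) \<le> wealth n p x" "wealth n p x \<le> exp (\<Sum>i<n. \<bar>x i\<bar>)"
proof -
  have "\<bar>x i\<bar> \<le> (\<Sum>i<n. \<bar>x i\<bar>)" if "i < n" for i
    using member_le_sum[of i "{..<n}" "\<lambda>i. \<bar>x i\<bar>"] that by auto
  then have "exp (- (\<Sum>i<n. \<bar>x i\<bar>)) \<le> exp (x i) \<and> exp (x i) \<le> exp (\<Sum>i<n. \<bar>x i\<bar>)" if "i < n" for i
    using that by fastforce
  from prob_simplex_sum_mult_bounds[OF assms this] show
    "exp (- (\<Sum>i<n. \<bar>x i\<bar>)) \<le> wealth n p x" "wealth n p x \<le> exp (\<Sum>i<n. \<bar>x i\<bar>)"
    by (simp_all add: wealth_def)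
qed

lemma wealth_pos: "p \<in> prob_simplex n \<Longrightarrow> 0 < wealth n p x"
  using wealth_bounds(1) exp_gt_zero less_le_trans by blast

lemma abs_ln_wealth_le:
  assumes "p \<in> prob_simplex n"
  shows "\<bar>ln (wealth n p x)\<bar> \<le> (\<Sum>i<n. \<bar>x i\<bar>)"
proof -
  have pos: "0 < wealth n p x" using wealth_pos[OF assms] .
  have "ln (wealth n p x) \<le> (\<Sum>i<n. \<bar>x i\<bar>)"
    using wealth_bounds(2)[OF assms] pos by (metis exp_gt_zero ln_exp ln_le_cancel_iff)
  moreover have "- (\<Sum>i<n. \<bar>x i\<bar>) \<le> ln (wealth n p x)"
    using wealth_bounds(1)[OF assms] pos by (simp add: ln_ge_iff)
  ultimately show ?thesis by simp
qed

lemma wealth_affine_comb: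
  "wealth n (\<lambda>i. q i + t * (p i - q i)) x = wealth n q x + t * (wealth n p x - wealth n q x)"
  unfolding wealth_def by (simp add: algebra_simps sum.distrib sum_subtractf sum_distrib_left)

lemma wealth_le_if_dominated:
  assumes "\<And>i. i < n \<Longrightarrow> p i \<le> C * q i"
  shows "wealth n p x \<le> C * wealth n q x"
proof -
  have "wealth n p x \<le> (\<Sum>i<n. C * q i * exp (x i))"
    unfolding wealth_def using assms by (auto intro!: sum_mono mult_right_mono)
  then show ?thesis by (simp add: wealth_def sum_distrib_left mult.assoc)
qed

lemma dominated_if_supp_subset:
  assumes p: "p \<in> prob_simplex n" and q: "q \<in> prob_simplex n" and sub: "supp n p \<subseteq> supp n q"
  obtains C where "1 \<le> C" "\<And>i. i < n \<Longrightarrow> p i \<le> C * q i"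
proof
  let ?C = "1 + (\<Sum>i<n. p i / q i)"
  have quot_nonneg: "0 \<le> p i / q i" if "i < n" for i
    using that p q by (simp add: prob_simplex_nonneg)
  then show "1 \<le> ?C" by (auto intro: sum_nonneg)
  show "p i \<le> ?C * q i" if i: "i < n" for i
  proof (cases "q i = 0")
    case True
    with i sub have "\<not> 0 < p i" by (auto simp: supp_def)
    with True show ?thesis by simp
  next
    case False
    then have "0 < q i" using prob_simplex_nonneg[OF q i] by simp
    moreover have "p i / q i \<le> ?C"
      using member_le_sum[of i "{..<n}" "\<lambda>i. p i / q i"] quot_nonneg i by auto
    ultimately show ?thesis by (simp add: divide_le_eq)
  qed
qed

lemma ln_wealth_affine_comb_diff:
  assumes "q \<in> prob_simplex n" "(\<lambda>i. q i + t * (p i - q i)) \<in> prob_simplex n"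
  shows "ln (wealth n (\<lambda>i. q i + t * (p i - q i)) x) - ln (wealth n q x)
       = ln (1 + t * (wealth n p x / wealth n q x - 1))"
proof -
  have q: "0 < wealth n q x" and comb: "0 < wealth n (\<lambda>i. q i + t * (p i - q i)) x"
    using assms by (simp_all add: wealth_pos)
  have eq: "wealth n (\<lambda>i. q i + t * (p i - q i)) x
          = wealth n q x * (1 + t * (wealth n p x / wealth n q x - 1))"
    unfolding wealth_affine_comb using q by (simp add: field_simps)
  then have "0 < 1 + t * (wealth n p x / wealth n q x - 1)"
    using comb q by (simp add: zero_less_mult_iff)
  with q show ?thesis unfolding eq by (simp add: ln_mult)
qed

lemma one_minus_inverse_le_ln:
  fixes x :: real
  assumes "0 < x"
  shows "1 - 1 / x \<le> ln x"
  using ln_le_minus_one[of "1 / x"] assms by (simp add: ln_div)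

lemma ln_one_plus_ge_quadratic:
  fixes z :: real
  assumes "-1/2 \<le> z"
  shows "z - 2 * z\<^sup>2 \<le> ln (1 + z)"
proof -
  have pos: "0 < 1 + z" using assms by linarith
  have "0 \<le> z\<^sup>2 * (1 + 2 * z)" using assms by simp
  then have "(z - 2 * z\<^sup>2) * (1 + z) \<le> z"
    by (simp add: algebra_simps power2_eq_square)
  then have "z - 2 * z\<^sup>2 \<le> 1 - 1 / (1 + z)"
    using pos by (simp add: field_simps)
  also have "\<dots> \<le> ln (1 + z)" by (rule one_minus_inverse_le_ln[OF pos])
  finally show ?thesis .
qed

lemma difference_quotient_ln_bounds:
  fixes t y :: real
  assumes t: "0 < t" "t \<le> 1/2" and y: "-1 \<le> y"
  shows "-2 \<le> y / (1 + t * y)" "y / (1 + t * y) \<le> 1 / t"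
    and "t * (y / (1 + t * y)) \<le> ln (1 + t * y)"
proof -
  have "- t \<le> t * y" using mult_left_mono[OF y, of t] t by simp
  then have pos: "0 < 1 + t * y" using t by linarith
  have "-1 * (1 + 2 * t) \<le> y * (1 + 2 * t)" using y t by (intro mult_right_mono) auto
  then show "-2 \<le> y / (1 + t * y)" using pos t by (simp add: le_divide_eq algebra_simps)
  show "y / (1 + t * y) \<le> 1 / t" using pos t by (simp add: divide_simps)
  have "t * (y / (1 + t * y)) = 1 - 1 / (1 + t * y)" using pos by (simp add: field_simps)
  also have "\<dots> \<le> ln (1 + t * y)" by (rule one_minus_inverse_le_ln[OF pos])
  finally show "t * (y / (1 + t * y)) \<le> ln (1 + t * y)" .
qed

lemma nonpos_if_le_linear_near_zero:
  fixes e K \<delta> :: real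
  assumes "0 < \<delta>" and le: "\<And>s. 0 < s \<Longrightarrow> s \<le> \<delta> \<Longrightarrow> e \<le> K * s"
  shows "e \<le> 0"
proof (rule ccontr)
  assume "\<not> e \<le> 0"
  then have e: "0 < e" by simp
  show False
  proof (cases "K \<le> 0")
    case True
    then show False using le[of \<delta>] e assms(1) by (smt (verit) mult_nonpos_nonneg)
  next
    case False
    define s where "s = min \<delta> (e / (2 * K))"
    have "0 < s" using e False assms(1) by (simp add: s_def)
    moreover have "K * s \<le> e / 2" using e False by (simp add: s_def min_def field_simps)
    ultimately show False using le[of s] e by (simp add: s_def)
  qed
qed

lemma (in finite_measure) integrable_limit_bounded_below:
  fixes f :: "nat \<Rightarrow> 'a \<Rightarrow> real"
  assumes f: "\<And>k. integrable M (f k)"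
    and lower: "\<And>k x. x \<in> space M \<Longrightarrow> b \<le> f k x"
    and lim: "\<And>x. x \<in> space M \<Longrightarrow> (\<lambda>k. f k x) \<longlonglongrightarrow> g x"
    and le: "\<And>k. integral\<^sup>L M (f k) \<le> c"
  shows "integrable M g" "integral\<^sup>L M g \<le> c"
proof -
  let ?\<mu> = "measure M (space M)"
  have g: "g \<in> borel_measurable M"
    by (rule borel_measurable_LIMSEQ_real[where u = f]) (use lim f in auto)
  have g_lower: "b \<le> g x" if "x \<in> space M" for x
    using LIMSEQ_le_const[OF lim[OF that]] lower[OF that] by blast
  have shifted: "(\<integral>\<^sup>+x. ennreal (f k x - b) \<partial>M) = ennreal (integral\<^sup>L M (f k) - b * ?\<mu>)" for k
  proof -
    have "(\<integral>\<^sup>+x. ennreal (f k x - b) \<partial>M) = ennreal (integral\<^sup>L M (\<lambda>x. f k x - b))"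
      using f lower by (intro nn_integral_eq_integral) auto
    then show ?thesis using f by (simp add: mult.commute)
  qed
  have "(\<integral>\<^sup>+x. ennreal (g x - b) \<partial>M) = (\<integral>\<^sup>+x. liminf (\<lambda>k. ennreal (f k x - b)) \<partial>M)"
    using lim by (intro nn_integral_cong lim_imp_Liminf[symmetric] tendsto_ennrealI tendsto_diff)
      auto
  also have "\<dots> \<le> liminf (\<lambda>k. \<integral>\<^sup>+x. ennreal (f k x - b) \<partial>M)"
    using f by (intro nn_integral_liminf) auto
  also have "\<dots> \<le> ennreal (c - b * ?\<mu>)"
    unfolding shifted using le by (intro Liminf_le always_eventually allI ennreal_leI) auto
  finally have bound: "(\<integral>\<^sup>+x. ennreal (g x - b) \<partial>M) \<le> ennreal (c - b * ?\<mu>)" .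
  have int_shift: "integrable M (\<lambda>x. g x - b)"
    using g g_lower bound by (intro integrableI_nonneg) (auto simp: top.not_eq_extremum
      intro: le_less_trans)
  then show int: "integrable M g"
    using Bochner_Integration.integrable_add[OF int_shift integrable_const[of b]] by simp
  have "0 \<le> integral\<^sup>L M (\<lambda>x. f 0 x - b)"
    using lower by (intro Bochner_Integration.integral_nonneg) auto
  then have "0 \<le> c - b * ?\<mu>"
    using f[of 0] le[of 0] by (simp add: mult.commute)
  moreover have "ennreal (integral\<^sup>L M (\<lambda>x. g x - b)) \<le> ennreal (c - b * ?\<mu>)"
    using bound g_lower int_shift by (subst nn_integral_eq_integral[symmetric]) auto
  ultimately show "integral\<^sup>L M g \<le> c"
    using int by (simp add: ennreal_le_iff mult.commute)
qed

lemma (in prob_space) integral_le_if_nn_integral_le: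
  fixes f :: "'a \<Rightarrow> real"
  assumes f: "f \<in> borel_measurable M" and pos: "\<And>x. 0 < f x"
    and le: "(\<integral>\<^sup>+x. ennreal (f x) \<partial>M) \<le> ennreal c"
  shows "integrable M f" "integral\<^sup>L M f \<le> c"
proof -
  show int: "integrable M f"
    using f pos le by (intro integrableI_nonneg) (auto simp: less_imp_le top.not_eq_extremum
      intro: le_less_trans)
  have nn: "(\<integral>\<^sup>+x. ennreal (f x) \<partial>M) = ennreal (integral\<^sup>L M f)"
    using int pos by (intro nn_integral_eq_integral) (auto simp: less_imp_le)
  have "integral\<^sup>L M f \<noteq> 0"
  proof
    assume "integral\<^sup>L M f = 0"
    then have "AE x in M. f x = 0"
      using integral_nonneg_eq_0_iff_AE[OF int] pos by (simp add: less_imp_le)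
    moreover have "AE x in M. f x \<noteq> 0" using pos by (intro AE_I2) (metis less_irrefl)
    ultimately have "AE x in M. False" by eventually_elim simp
    then show False by simp
  qed
  moreover have "0 \<le> integral\<^sup>L M f"
    using pos by (intro Bochner_Integration.integral_nonneg) (simp add: less_imp_le)
  ultimately have "0 < integral\<^sup>L M f" by simp
  with le show "integral\<^sup>L M f \<le> c"
    unfolding nn by (simp add: ennreal_le_iff2)
qed

locale log_portfolio = prob_space M for M :: "'a measure" +
  fixes r :: "'a \<Rightarrow> nat \<Rightarrow> real" and n :: nat
  assumes integrable_return: "\<And>i. i < n \<Longrightarrow> integrable M (\<lambda>\<omega>. r \<omega> i)"
begin

definition J :: "(nat \<Rightarrow> real) \<Rightarrow> real" where
  "J p = expectation (\<lambda>\<omega>. gamma n p (r \<omega>))"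

definition mean_gain :: "(nat \<Rightarrow> real) \<Rightarrow> (nat \<Rightarrow> real) \<Rightarrow> real" where
  "mean_gain p q = (\<Sum>i<n. (p i - q i) * expectation (\<lambda>\<omega>. r \<omega> i))"

definition ratio :: "(nat \<Rightarrow> real) \<Rightarrow> (nat \<Rightarrow> real) \<Rightarrow> 'a \<Rightarrow> real" where
  "ratio p q \<omega> = wealth n p (r \<omega>) / wealth n q (r \<omega>)"

lemma ratio_pos: "p \<in> prob_simplex n \<Longrightarrow> q \<in> prob_simplex n \<Longrightarrow> 0 < ratio p q \<omega>"
  by (simp add: ratio_def wealth_pos)

lemma borel_measurable_wealth: "(\<lambda>\<omega>. wealth n p (r \<omega>)) \<in> borel_measurable M"
  unfolding wealth_def using integrable_return by (intro borel_measurable_sum) auto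

lemma borel_measurable_ratio: "ratio p q \<in> borel_measurable M"
  unfolding ratio_def[abs_def] using borel_measurable_wealth by measurable

lemma integrable_ln_wealth:
  assumes "p \<in> prob_simplex n"
  shows "integrable M (\<lambda>\<omega>. ln (wealth n p (r \<omega>)))"
proof (rule Bochner_Integration.integrable_bound)
  show "integrable M (\<lambda>\<omega>. \<Sum>i<n. \<bar>r \<omega> i\<bar>)"
    using integrable_return by (intro Bochner_Integration.integrable_sum integrable_abs) auto
  show "(\<lambda>\<omega>. ln (wealth n p (r \<omega>))) \<in> borel_measurable M"
    using borel_measurable_wealth by measurable
  show "AE \<omega> in M. norm (ln (wealth n p (r \<omega>))) \<le> norm (\<Sum>i<n. \<bar>r \<omega> i\<bar>)"
    using abs_ln_wealth_le[OF assms] by auto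
qed

lemma J_eq:
  assumes "p \<in> prob_simplex n"
  shows "J p = expectation (\<lambda>\<omega>. ln (wealth n p (r \<omega>))) - (\<Sum>i<n. p i * expectation (\<lambda>\<omega>. r \<omega> i))"
proof -
  have "J p = expectation (\<lambda>\<omega>. ln (wealth n p (r \<omega>)) - (\<Sum>i<n. p i * r \<omega> i))"
    using gamma_eq_ln_wealth[OF assms] by (simp add: J_def)
  also have "\<dots> = expectation (\<lambda>\<omega>. ln (wealth n p (r \<omega>))) - expectation (\<lambda>\<omega>. \<Sum>i<n. p i * r \<omega> i)"
    using integrable_ln_wealth[OF assms] integrable_return
    by (intro Bochner_Integration.integral_diff Bochner_Integration.integrable_sum) auto
  also have "expectation (\<lambda>\<omega>. \<Sum>i<n. p i * r \<omega> i) = (\<Sum>i<n. p i * expectation (\<lambda>\<omega>. r \<omega> i))"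
    using integrable_return by (subst Bochner_Integration.integral_sum) auto
  finally show ?thesis .
qed

lemma
  assumes "p \<in> prob_simplex n" "q \<in> prob_simplex n" "(\<lambda>i. q i + t * (p i - q i)) \<in> prob_simplex n"
  shows integrable_ln_ratio_affine_comb:
      "integrable M (\<lambda>\<omega>. ln (1 + t * (ratio p q \<omega> - 1)))"
    and J_affine_comb_diff:
      "J (\<lambda>i. q i + t * (p i - q i)) - J q
       = expectation (\<lambda>\<omega>. ln (1 + t * (ratio p q \<omega> - 1))) - t * mean_gain p q"
proof -
  let ?c = "\<lambda>i. q i + t * (p i - q i)" and ?m = "\<lambda>i. expectation (\<lambda>\<omega>. r \<omega> i)"
  have ln_diff: "ln (1 + t * (ratio p q \<omega> - 1)) = ln (wealth n ?c (r \<omega>)) - ln (wealth n q (r \<omega>))" for \<omega>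
    using ln_wealth_affine_comb_diff[OF assms(2,3)] by (simp add: ratio_def)
  show int: "integrable M (\<lambda>\<omega>. ln (1 + t * (ratio p q \<omega> - 1)))"
    unfolding ln_diff using assms by (intro Bochner_Integration.integrable_diff integrable_ln_wealth)
  have "expectation (\<lambda>\<omega>. ln (1 + t * (ratio p q \<omega> - 1)))
      = expectation (\<lambda>\<omega>. ln (wealth n ?c (r \<omega>))) - expectation (\<lambda>\<omega>. ln (wealth n q (r \<omega>)))"
    unfolding ln_diff using assms by (intro Bochner_Integration.integral_diff integrable_ln_wealth)
  moreover have "(\<Sum>i<n. ?c i * ?m i) - (\<Sum>i<n. q i * ?m i) = t * (\<Sum>i<n. (p i - q i) * ?m i)"
    by (simp add: algebra_simps sum.distrib sum_subtractf sum_distrib_left)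
  ultimately show "J ?c - J q = expectation (\<lambda>\<omega>. ln (1 + t * (ratio p q \<omega> - 1))) - t * mean_gain p q"
    unfolding J_eq[OF assms(3)] J_eq[OF assms(2)] mean_gain_def by linarith
qed

lemma nn_integral_ratio:
  assumes "p \<in> prob_simplex n" "q \<in> prob_simplex n" "integrable M (ratio p q)"
  shows "(\<integral>\<^sup>+\<omega>. ennreal (ratio p q \<omega>) \<partial>M) = ennreal (expectation (ratio p q))"
  using assms ratio_pos by (intro nn_integral_eq_integral) (auto simp: less_imp_le)

lemma J_le_if_nn_integral_ratio_le:
  assumes p: "p \<in> prob_simplex n" and q: "q \<in> prob_simplex n"
    and le: "(\<integral>\<^sup>+\<omega>. ennreal (ratio p q \<omega>) \<partial>M) \<le> ennreal (1 + mean_gain p q)"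
  shows "J p \<le> J q"
proof -
  have int: "integrable M (ratio p q)" and bound: "expectation (ratio p q) \<le> 1 + mean_gain p q"
    using integral_le_if_nn_integral_le[OF borel_measurable_ratio ratio_pos[OF p q] le] by auto
  have "J p - J q = expectation (\<lambda>\<omega>. ln (ratio p q \<omega>)) - mean_gain p q"
    using J_affine_comb_diff[of p q 1] p q by simp
  also have "expectation (\<lambda>\<omega>. ln (ratio p q \<omega>)) \<le> expectation (\<lambda>\<omega>. ratio p q \<omega> - 1)"
    using integrable_ln_ratio_affine_comb[of p q 1] p q int ratio_pos[OF p q]
    by (intro integral_mono ln_le_minus_one) auto
  also have "\<dots> = expectation (ratio p q) - 1"
    using int by (simp add: prob_space)
  finally show ?thesis using bound by simp
qed

lemma
  assumes p: "p \<in> prob_simplex n" and q: "q \<in> prob_simplex n"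
    and opt: "\<And>p'. p' \<in> prob_simplex n \<Longrightarrow> J p' \<le> J q"
  shows integrable_ratio_if_optimal: "integrable M (ratio p q)"
    and expectation_ratio_le_if_optimal: "expectation (ratio p q) \<le> 1 + mean_gain p q"
proof -
  define Y where "Y \<omega> = ratio p q \<omega> - 1" for \<omega>
  define t where "t k = inverse (real (Suc k)) / 2" for k
  \<comment> \<open>\<open>t k * f k \<le> ln (1 + t k * Y)\<close>, and \<open>f k\<close> is bounded below, so Fatou's lemma applies\<close>
  define f where "f k \<omega> = Y \<omega> / (1 + t k * Y \<omega>)" for k \<omega>
  have t: "0 < t k" "t k \<le> 1/2" for k
    by (auto simp: t_def field_simps)
  have Y_ge: "-1 \<le> Y \<omega>" for \<omega>
    using ratio_pos[OF p q] by (simp add: Y_def less_imp_le)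
  note f_bounds = difference_quotient_ln_bounds[OF t Y_ge, folded f_def]
  have f_meas: "f k \<in> borel_measurable M" for k
    unfolding f_def Y_def using borel_measurable_ratio by measurable
  have f_int: "integrable M (f k)" for k
  proof (rule integrable_const_bound[OF AE_I2 f_meas])
    show "norm (f k \<omega>) \<le> 2 + 1 / t k" for \<omega>
      using f_bounds(1,2)[of k \<omega>] t(1)[of k] by (simp add: abs_le_iff add_increasing2)
  qed
  have f_le: "expectation (f k) \<le> mean_gain p q" for k
  proof -
    have comb: "(\<lambda>i. q i + t k * (p i - q i)) \<in> prob_simplex n"
      using t[of k] by (intro convex_comb_in_prob_simplex p q) auto
    have "t k * expectation (f k) = expectation (\<lambda>\<omega>. t k * f k \<omega>)" by simp
    also have "\<dots> \<le> expectation (\<lambda>\<omega>. ln (1 + t k * Y \<omega>))"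
      using f_int f_bounds(3) integrable_ln_ratio_affine_comb[OF p q comb]
      by (intro integral_mono) (auto simp: Y_def)
    also have "\<dots> = J (\<lambda>i. q i + t k * (p i - q i)) - J q + t k * mean_gain p q"
      using J_affine_comb_diff[OF p q comb] by (simp add: Y_def)
    also have "\<dots> \<le> t k * mean_gain p q"
      using opt[OF comb] by simp
    finally show ?thesis using t[of k] by simp
  qed
  have "(\<lambda>k. f k \<omega>) \<longlonglongrightarrow> Y \<omega> / (1 + 0 * Y \<omega>)" for \<omega>
    unfolding f_def t_def by (intro tendsto_intros tendsto_divide_zero LIMSEQ_inverse_real_of_nat) simp
  then have "integrable M Y" "expectation Y \<le> mean_gain p q"
    using integrable_limit_bounded_below[where f = f and b = "-2" and g = Y and c = "mean_gain p q"]
      f_int f_bounds(1) f_le by auto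
  moreover have "ratio p q = (\<lambda>\<omega>. Y \<omega> + 1)"
    by (simp add: Y_def)
  ultimately show "integrable M (ratio p q)" "expectation (ratio p q) \<le> 1 + mean_gain p q"
    by (simp_all add: prob_space)
qed

lemma expectation_ratio_ge_if_optimal:
  assumes p: "p \<in> prob_simplex n" and q: "q \<in> prob_simplex n"
    and opt: "\<And>p'. p' \<in> prob_simplex n \<Longrightarrow> J p' \<le> J q"
    and sub: "supp n p \<subseteq> supp n q"
  shows "1 + mean_gain p q \<le> expectation (ratio p q)"
proof -
  obtain C where C: "1 \<le> C" and dom: "\<And>i. i < n \<Longrightarrow> p i \<le> C * q i"
    using dominated_if_supp_subset[OF p q sub] by blast
  have int: "integrable M (ratio p q)"
    using integrable_ratio_if_optimal[OF p q opt] .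
  have ratio_le: "ratio p q \<omega> \<le> C" for \<omega>
    using wealth_le_if_dominated[OF dom] wealth_pos[OF q] by (simp add: ratio_def divide_le_eq)
  have abs_le: "\<bar>ratio p q \<omega> - 1\<bar> \<le> C" for \<omega>
    using ratio_le[of \<omega>] ratio_pos[OF p q, of \<omega>] C by (simp add: abs_le_iff)
  have "1 + mean_gain p q - expectation (ratio p q) \<le> 2 * C\<^sup>2 * s"
    if s: "0 < s" "s \<le> 1 / (2 * C)" for s
  proof -
    have sC: "s * C \<le> 1/2" using s C by (simp add: field_simps)
    have comb: "(\<lambda>i. q i + (-s) * (p i - q i)) \<in> prob_simplex n"
    proof (rule affine_comb_in_prob_simplex[OF p q])
      fix i assume i: "i < n"
      have "s * p i \<le> (s * C) * q i" using dom[OF i] s by (simp add: mult.assoc mult_left_mono)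
      also have "\<dots> \<le> q i" using sC C s prob_simplex_nonneg[OF q i] by (simp add: mult_left_le_one_le)
      finally have "s * p i \<le> q i" .
      moreover have "0 \<le> s * q i" using s prob_simplex_nonneg[OF q i] by simp
      ultimately show "0 \<le> q i + (-s) * (p i - q i)" by (simp add: algebra_simps)
    qed
    have pointwise: "-s * (ratio p q \<omega> - 1) - 2 * s\<^sup>2 * C\<^sup>2 \<le> ln (1 + (-s) * (ratio p q \<omega> - 1))" for \<omega>
    proof -
      have small: "\<bar>(-s) * (ratio p q \<omega> - 1)\<bar> \<le> s * C"
        using abs_le[of \<omega>] s by (simp add: abs_mult mult_left_mono)
      then have "-1/2 \<le> (-s) * (ratio p q \<omega> - 1)"
        using sC by (simp only: abs_le_iff) linarith
      moreover have "\<bar>(-s) * (ratio p q \<omega> - 1)\<bar>\<^sup>2 \<le> (s * C)\<^sup>2"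
        using small by (intro power_mono) auto
      then have "((-s) * (ratio p q \<omega> - 1))\<^sup>2 \<le> s\<^sup>2 * C\<^sup>2"
        by (simp add: power_mult_distrib)
      ultimately show ?thesis
        using ln_one_plus_ge_quadratic[of "(-s) * (ratio p q \<omega> - 1)"] by simp
    qed
    have "-s * (expectation (ratio p q) - 1) - 2 * s\<^sup>2 * C\<^sup>2
        = expectation (\<lambda>\<omega>. -s * (ratio p q \<omega> - 1) - 2 * s\<^sup>2 * C\<^sup>2)"
      using int by (simp add: prob_space)
    also have "\<dots> \<le> expectation (\<lambda>\<omega>. ln (1 + (-s) * (ratio p q \<omega> - 1)))"
      using int integrable_ln_ratio_affine_comb[OF p q comb] pointwise by (intro integral_mono) auto
    also have "\<dots> \<le> -s * mean_gain p q"
      using J_affine_comb_diff[OF p q comb] opt[OF comb] by simp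
    finally have "s * (1 + mean_gain p q - expectation (ratio p q)) \<le> s * (2 * C\<^sup>2 * s)"
      by (simp add: algebra_simps power2_eq_square)
    then show ?thesis using s by simp
  qed
  then have "1 + mean_gain p q - expectation (ratio p q) \<le> 0"
    using C by (intro nonpos_if_le_linear_near_zero[of "1 / (2 * C)"]) auto
  then show ?thesis by simp
qed

theorem optimal_iff_nn_integral_ratio:
  assumes q: "q \<in> prob_simplex n"
  shows "(\<forall>p\<in>prob_simplex n. J p \<le> J q) \<longleftrightarrow>
    (\<forall>p\<in>prob_simplex n. (\<integral>\<^sup>+\<omega>. ennreal (ratio p q \<omega>) \<partial>M) \<le> ennreal (1 + mean_gain p q)) \<and>
    (\<forall>p\<in>prob_simplex n. supp n p \<subseteq> supp n q \<longrightarrow>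
       (\<integral>\<^sup>+\<omega>. ennreal (ratio p q \<omega>) \<partial>M) = ennreal (1 + mean_gain p q))"
  (is "?opt \<longleftrightarrow> ?le \<and> ?eq")
proof
  assume opt: ?opt
  have nn: "(\<integral>\<^sup>+\<omega>. ennreal (ratio p q \<omega>) \<partial>M) = ennreal (expectation (ratio p q))"
    if "p \<in> prob_simplex n" for p
    using nn_integral_ratio integrable_ratio_if_optimal that q opt by blast
  show "?le \<and> ?eq"
  proof (intro conjI ballI impI)
    fix p assume p: "p \<in> prob_simplex n"
    have le: "expectation (ratio p q) \<le> 1 + mean_gain p q"
      using expectation_ratio_le_if_optimal[OF p q] opt by blast
    then show "(\<integral>\<^sup>+\<omega>. ennreal (ratio p q \<omega>) \<partial>M) \<le> ennreal (1 + mean_gain p q)"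
      unfolding nn[OF p] by (rule ennreal_leI)
    assume "supp n p \<subseteq> supp n q"
    then have "1 + mean_gain p q \<le> expectation (ratio p q)"
      using expectation_ratio_ge_if_optimal[OF p q] opt by blast
    with le show "(\<integral>\<^sup>+\<omega>. ennreal (ratio p q \<omega>) \<partial>M) = ennreal (1 + mean_gain p q)"
      unfolding nn[OF p] by simp
  qed
next
  assume "?le \<and> ?eq"
  then show ?opt using J_le_if_nn_integral_ratio_le[OF _ q] by blast
qed

end

theorem mainTheorem19:
  fixes M :: "'a measure" and r :: "'a \<Rightarrow> nat \<Rightarrow> real" and n :: nat
    and pstar :: "nat \<Rightarrow> real"
  assumes "prob_space M"
    and "n \<ge> 2"
    and "\<And>i. i < n \<Longrightarrow> integrable M (\<lambda>\<omega>. r \<omega> i)"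
    and "pstar \<in> prob_simplex n"
  defines "m \<equiv> (\<lambda>i. integral\<^sup>L M (\<lambda>\<omega>. r \<omega> i))"
    and "J \<equiv> (\<lambda>p. integral\<^sup>L M (\<lambda>\<omega>. gamma n p (r \<omega>)))"
  shows "(\<forall>p\<in>prob_simplex n. J p \<le> J pstar) \<longleftrightarrow>
         ((\<forall>p\<in>prob_simplex n.
             (\<integral>\<^sup>+ \<omega>. ennreal ((\<Sum>i<n. p i * exp (r \<omega> i)) / (\<Sum>i<n. pstar i * exp (r \<omega> i))) \<partial>M)
               \<le> ennreal (1 + (\<Sum>i<n. (p i - pstar i) * m i))) \<and>
          (\<forall>p\<in>prob_simplex n. supp n p \<subseteq> supp n pstar \<longrightarrow>
             (\<integral>\<^sup>+ \<omega>. ennreal ((\<Sum>i<n. p i * exp (r \<omega> i)) / (\<Sum>i<n. pstar i * exp (r \<omega> i))) \<partial>M)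
               = ennreal (1 + (\<Sum>i<n. (p i - pstar i) * m i))))"
proof -
  interpret P: log_portfolio M r n
    using assms(1,3) by (simp add: log_portfolio_def log_portfolio_axioms_def)
  show ?thesis
    using P.optimal_iff_nn_integral_ratio[OF assms(4)]
    by (simp add: J_def m_def P.J_def P.mean_gain_def P.ratio_def wealth_def)
qed

end
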